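(* Let $\alpha_1\ge\alpha_2\ge\dots>0$ with $\sum_{n\ge1}\alpha_n<\infty$, let $R_n=\sum_{i=n+1}^\infty\alpha_i$ for $n\ge0$, and suppose $\alpha_n>R_n$ for every $n\ge1$. Let $r(t)=\prod_{n=1}^\infty\cos(\alpha_nt)$ and $\sigma^2=-r''(0)=\sum_n\alpha_n^2$. For $T>0$ define $M=M_T$ by $R_M<\frac1T\le R_{M-1}$. Then there exist constants $C_1,C_2>0$ and $T_0>0$ such that for all $T\ge T_0$, \[ C_1T^22^{-M}\le T\int_{0}^T \left(1-\frac{t}{T}\right) \left(r(t)+\frac{r''(t)}{\sigma^2}\right)^2 dt \le C_2T^22^{-M}. \]
   Context: $r$ is the covariance of the stationary Gaussian process whose spectral measure is the infinite convolution of the symmetrised atoms $\frac12(\delta_{\alpha_n}+\delta_{-\alpha_n})$. *)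

theory Defs
  imports "HOL-Analysis.Analysis"
begin

text \<open>The sequence alpha is indexed from 1 (alpha 0 is irrelevant).\<close>

definition tailsum :: "(nat \<Rightarrow> real) \<Rightarrow> nat \<Rightarrow> real" where
  "tailsum \<alpha> n = (\<Sum>i. \<alpha> (i + n + 1))"

definition cov :: "(nat \<Rightarrow> real) \<Rightarrow> real \<Rightarrow> real" where
  "cov \<alpha> t = (\<Prod>n. cos (\<alpha> (Suc n) * t))"

definition M_T :: "(nat \<Rightarrow> real) \<Rightarrow> real \<Rightarrow> nat" where
  "M_T \<alpha> T = (THE M. 1 \<le> M \<and> tailsum \<alpha> M < 1 / T \<and> 1 / T \<le> tailsum \<alpha> (M - 1))"

end

theory Submission
  imports Defs
begin

text \<open>
  With independent fair signs \<open>\<epsilon>\<^sub>n\<close>, \<open>r\<close> is the characteristic function of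
  \<open>X = \<Sum>\<^sub>n \<epsilon>\<^sub>n \<alpha>\<^sub>n\<close>, and \<open>r + r''/\<sigma>\<^sup>2\<close> is the Fourier transform of \<open>g X\<close> with
  \<open>g x = 1 - x\<^sup>2/\<sigma>\<^sup>2\<close>. Expanding the square as a double expectation over an independent copy
  \<open>X'\<close> and integrating in \<open>t\<close> turns the quantity into \<open>E g(X) g(X') F\<^sub>T(X - X')\<close>, where
  \<open>F\<^sub>T u = (1 - cos (T u))/u\<^sup>2\<close> is the Fejer kernel: it is at least \<open>T\<^sup>2/3\<close> for \<open>|u| \<le> 2/T\<close>
  and at most \<open>min (T\<^sup>2/2) (2/u\<^sup>2)\<close> everywhere.

  Since \<open>\<alpha>\<^sub>n > R\<^sub>n\<close>, the tails at least halve at each step, and once the signs of \<open>X\<close> and \<open>X'\<close>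
  disagree at some index, \<open>|X - X'|\<close> exceeds twice the current tail unless every later
  disagreement goes in the compensating direction, which happens with probability \<open>1/4\<close> per
  index. So the kernel is of size \<open>T\<^sup>2\<close> essentially only when the first \<open>M\<close> signs agree, an event
  of probability \<open>2\<^sup>-\<^sup>M\<close>; this gives the upper bound. For the lower bound, write
  \<open>g(x) g(y) = (g(x)\<^sup>2 + g(y)\<^sup>2)/2 - (g(x) - g(y))\<^sup>2/2\<close>: the diagonal part is at least
  \<open>T\<^sup>2 E g(X)\<^sup>2 2\<^sup>-\<^sup>M / 3\<close> because agreeing first \<open>M\<close> signs force \<open>|X - X'| \<le> 2 R\<^sub>M < 2/T\<close>,
  while the correction is bounded since \<open>(g(x) - g(y))\<^sup>2 = O((x - y)\<^sup>2)\<close> and \<open>u\<^sup>2 F\<^sub>T(u) \<le> 2\<close>.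

  All identities are proved for the truncated sums \<open>X\<^sub>N\<close>, where expectations are finite
  averages, and passed to the limit \<open>N \<rightarrow> \<infinity>\<close> by dominated convergence.
\<close>

section \<open>Averages over random signs\<close>

text \<open>\<open>sign_mean a m k h\<close> is the expectation of \<open>h (\<Sum>i\<in>{k..<k+m}. \<epsilon>\<^sub>i * a i)\<close> for independent
  fair signs \<open>\<epsilon>\<^sub>i \<in> {-1, 1}\<close>.\<close>

fun sign_mean :: "(nat \<Rightarrow> real) \<Rightarrow> nat \<Rightarrow> nat \<Rightarrow> (real \<Rightarrow> real) \<Rightarrow> real" where
  "sign_mean a 0 k h = h 0"
| "sign_mean a (Suc m) k h =
    (sign_mean a m (Suc k) (\<lambda>x. h (x + a k)) + sign_mean a m (Suc k) (\<lambda>x. h (x - a k))) / 2"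

lemma sign_mean_add: "sign_mean a m k (\<lambda>x. f x + g x) = sign_mean a m k f + sign_mean a m k g"
  by (induction m arbitrary: k f g) (auto simp: field_simps)

lemma sign_mean_cmult: "sign_mean a m k (\<lambda>x. c * f x) = c * sign_mean a m k f"
  by (induction m arbitrary: k f) (auto simp: field_simps)

lemma sign_mean_const: "sign_mean a m k (\<lambda>x. c) = c"
  by (induction m arbitrary: k) auto

lemma sign_mean_diff: "sign_mean a m k (\<lambda>x. f x - g x) = sign_mean a m k f - sign_mean a m k g"
  using sign_mean_add[of a m k f "\<lambda>x. - g x"] sign_mean_cmult[of a m k "-1" g] by simp

lemma sign_mean_divide: "sign_mean a m k (\<lambda>x. f x / c) = sign_mean a m k f / c"
  using sign_mean_cmult[of a m k "1/c" f] by simp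

lemma sign_mean_mono: "(\<And>x. f x \<le> g x) \<Longrightarrow> sign_mean a m k f \<le> sign_mean a m k g"
  by (induction m arbitrary: k f g) (auto simp: add_mono divide_right_mono)

lemma sign_mean_nonneg: "(\<And>x. 0 \<le> f x) \<Longrightarrow> 0 \<le> sign_mean a m k f"
  using sign_mean_mono[of "\<lambda>x. 0" f a m k] by (simp add: sign_mean_const)

lemma sum_atLeastLessThan_Suc_shift:
  "(\<Sum>i\<in>{k..<k + Suc m}. a i) = a k + (\<Sum>i\<in>{Suc k..<Suc k + m}. a i)"
  using sum.atLeast_Suc_lessThan[of k "k + Suc m" a] by simp

lemma sign_mean_mono_on:
  assumes "\<And>i. 0 \<le> a i"
    and "\<And>x. \<bar>x\<bar> \<le> (\<Sum>i\<in>{k..<k+m}. a i) \<Longrightarrow> f x \<le> g x"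
  shows "sign_mean a m k f \<le> sign_mean a m k g"
  using assms(2)
proof (induction m arbitrary: k f g)
  case (Suc m)
  have "sign_mean a m (Suc k) (\<lambda>x. f (x + a k)) \<le> sign_mean a m (Suc k) (\<lambda>x. g (x + a k))"
    "sign_mean a m (Suc k) (\<lambda>x. f (x - a k)) \<le> sign_mean a m (Suc k) (\<lambda>x. g (x - a k))"
    by (rule Suc.IH, rule Suc.prems,
        use sum_atLeastLessThan_Suc_shift[where a=a and k=k and m=m] assms(1)[of k] in auto)+
  then show ?case by simp
qed simp

lemma sign_mean_abs_le:
  assumes "\<And>i. 0 \<le> a i" and "\<And>x. \<bar>x\<bar> \<le> (\<Sum>i\<in>{k..<k+m}. a i) \<Longrightarrow> \<bar>h x\<bar> \<le> B"
  shows "\<bar>sign_mean a m k h\<bar> \<le> B"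
proof -
  have "sign_mean a m k h \<le> sign_mean a m k (\<lambda>x. B)"
    "sign_mean a m k (\<lambda>x. - B) \<le> sign_mean a m k h"
    by (rule sign_mean_mono_on[OF assms(1)], metis abs_le_iff assms(2) minus_le_iff)+
  then show ?thesis by (simp add: sign_mean_const)
qed

lemma sign_mean_reflect: "sign_mean a m k (\<lambda>x. f (- x)) = sign_mean a m k f"
proof (induction m arbitrary: k f)
  case (Suc m)
  have "sign_mean a m (Suc k) (\<lambda>x. f (- (x + a k))) = sign_mean a m (Suc k) (\<lambda>x. f (x - a k))"
    "sign_mean a m (Suc k) (\<lambda>x. f (- (x - a k))) = sign_mean a m (Suc k) (\<lambda>x. f (x + a k))"
    using Suc.IH[of "Suc k" "\<lambda>x. f (x - a k)"] Suc.IH[of "Suc k" "\<lambda>x. f (x + a k)"]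
    by (simp_all add: algebra_simps)
  then show ?case by simp
qed simp

lemma sign_mean_swap:
  "sign_mean a m k (\<lambda>x. sign_mean b n j (H x)) = sign_mean b n j (\<lambda>y. sign_mean a m k (\<lambda>x. H x y))"
  by (induction m arbitrary: k H) (simp_all add: sign_mean_add sign_mean_divide)

lemma has_real_derivative_sign_mean:
  assumes "\<And>x t. ((\<lambda>t. h t x) has_real_derivative h' t x) (at t)"
  shows "((\<lambda>t. sign_mean a m k (h t)) has_real_derivative sign_mean a m k (h' t)) (at t)"
  using assms
proof (induction m arbitrary: k h h')
  case (Suc m)
  have "((\<lambda>t. sign_mean a m (Suc k) (\<lambda>x. h t (x + a k)))
      has_real_derivative sign_mean a m (Suc k) (\<lambda>x. h' t (x + a k))) (at t)"
    "((\<lambda>t. sign_mean a m (Suc k) (\<lambda>x. h t (x - a k)))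
      has_real_derivative sign_mean a m (Suc k) (\<lambda>x. h' t (x - a k))) (at t)"
    by (rule Suc.IH, rule Suc.prems)+
  from DERIV_cdivide[OF DERIV_add[OF this], of 2] show ?case by simp
qed simp

lemma has_integral_sign_mean:
  assumes "\<And>x. ((\<lambda>t. h t x) has_integral I x) S"
  shows "((\<lambda>t. sign_mean a m k (h t)) has_integral sign_mean a m k I) S"
  using assms
proof (induction m arbitrary: k h I)
  case (Suc m)
  have "((\<lambda>t. sign_mean a m (Suc k) (\<lambda>x. h t (x + a k)))
      has_integral sign_mean a m (Suc k) (\<lambda>x. I (x + a k))) S"
    "((\<lambda>t. sign_mean a m (Suc k) (\<lambda>x. h t (x - a k)))
      has_integral sign_mean a m (Suc k) (\<lambda>x. I (x - a k))) S"
    by (rule Suc.IH, rule Suc.prems)+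
  from has_integral_divide[OF has_integral_add[OF this], of 2] show ?case by simp
qed simp

lemma sign_mean_cos:
  "sign_mean a m k (\<lambda>x. cos (t * (x + c))) = cos (t * c) * (\<Prod>i\<in>{k..<k+m}. cos (a i * t))"
proof (induction m arbitrary: k c)
  case (Suc m)
  define P where "P = (\<Prod>i\<in>{Suc k..<Suc k+m}. cos (a i * t))"
  have prod: "(\<Prod>i\<in>{k..<k+Suc m}. cos (a i * t)) = cos (a k * t) * P"
    by (simp add: prod.atLeast_Suc_lessThan P_def)
  have plus: "sign_mean a m (Suc k) (\<lambda>x. cos (t * (x + a k + c))) = cos (t * (a k + c)) * P"
    using Suc.IH[of "Suc k" "a k + c"] by (simp add: add.assoc P_def)
  have minus: "sign_mean a m (Suc k) (\<lambda>x. cos (t * (x - a k + c))) = cos (t * (c - a k)) * P"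
    using Suc.IH[of "Suc k" "c - a k"] by (simp add: algebra_simps P_def)
  have "cos (t * (a k + c)) + cos (t * (c - a k)) = 2 * cos (t * c) * cos (a k * t)"
    by (simp add: cos_add cos_diff algebra_simps)
  then have "(cos (t * (a k + c)) * P + cos (t * (c - a k)) * P) / 2 = cos (t * c) * (cos (a k * t) * P)"
    by (simp add: distrib_right[symmetric])
  then show ?case
    unfolding sign_mean.simps plus minus prod .
qed simp

lemma sign_mean_square:
  "sign_mean a m k (\<lambda>x. (x + c)\<^sup>2) = c\<^sup>2 + (\<Sum>i\<in>{k..<k+m}. (a i)\<^sup>2)"
proof (induction m arbitrary: k c)
  case (Suc m)
  define S2 where "S2 = (\<Sum>i\<in>{Suc k..<Suc k+m}. (a i)\<^sup>2)"
  have s: "(\<Sum>i\<in>{k..<k+Suc m}. (a i)\<^sup>2) = (a k)\<^sup>2 + S2"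
    by (simp add: sum.atLeast_Suc_lessThan S2_def)
  have 1: "sign_mean a m (Suc k) (\<lambda>x. (x + a k + c)\<^sup>2) = (a k + c)\<^sup>2 + S2"
    using Suc.IH[of "Suc k" "a k + c"] by (simp add: add.assoc S2_def)
  have 2: "sign_mean a m (Suc k) (\<lambda>x. (x - a k + c)\<^sup>2) = (c - a k)\<^sup>2 + S2"
    using Suc.IH[of "Suc k" "c - a k"] by (simp add: algebra_simps S2_def)
  show ?case
    unfolding sign_mean.simps 1 2 s by (simp add: power2_eq_square algebra_simps)
qed simp

lemma sign_mean_power4:
  "sign_mean a m k (\<lambda>x. (x + c) ^ 4) = c ^ 4 + 6 * c\<^sup>2 * (\<Sum>i\<in>{k..<k+m}. (a i)\<^sup>2)
     + 3 * (\<Sum>i\<in>{k..<k+m}. (a i)\<^sup>2)\<^sup>2 - 2 * (\<Sum>i\<in>{k..<k+m}. a i ^ 4)"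
proof (induction m arbitrary: k c)
  case (Suc m)
  define S2 where "S2 = (\<Sum>i\<in>{Suc k..<Suc k+m}. (a i)\<^sup>2)"
  define S4 where "S4 = (\<Sum>i\<in>{Suc k..<Suc k+m}. a i ^ 4)"
  have s: "(\<Sum>i\<in>{k..<k+Suc m}. (a i)\<^sup>2) = (a k)\<^sup>2 + S2"
    "(\<Sum>i\<in>{k..<k+Suc m}. a i ^ 4) = a k ^ 4 + S4"
    by (simp_all add: sum.atLeast_Suc_lessThan S2_def S4_def)
  have 1: "sign_mean a m (Suc k) (\<lambda>x. (x + a k + c) ^ 4)
      = (a k + c) ^ 4 + 6 * (a k + c)\<^sup>2 * S2 + 3 * S2\<^sup>2 - 2 * S4"
    using Suc.IH[of "Suc k" "a k + c"] by (simp add: add.assoc S2_def S4_def)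
  have 2: "sign_mean a m (Suc k) (\<lambda>x. (x - a k + c) ^ 4)
      = (c - a k) ^ 4 + 6 * (c - a k)\<^sup>2 * S2 + 3 * S2\<^sup>2 - 2 * S4"
    using Suc.IH[of "Suc k" "c - a k"] by (simp add: algebra_simps S2_def S4_def)
  show ?case
    unfolding sign_mean.simps 1 2 s by (simp add: field_simps power2_eq_square power4_eq_xxxx)
qed simp

text \<open>The expectation of \<open>H (X - X')\<close> for independent copies \<open>X\<close>, \<open>X'\<close> of the sign sum: each
  summand \<open>(\<epsilon>\<^sub>i - \<epsilon>'\<^sub>i) a\<^sub>i\<close> is \<open>\<plusminus>2 a\<^sub>i\<close> with probability 1/4 each and 0 with probability 1/2.\<close>

fun diff_mean :: "(nat \<Rightarrow> real) \<Rightarrow> nat \<Rightarrow> nat \<Rightarrow> (real \<Rightarrow> real) \<Rightarrow> real" where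
  "diff_mean a 0 k h = h 0"
| "diff_mean a (Suc m) k h = (diff_mean a m (Suc k) (\<lambda>z. h (z + 2 * a k)) + 2 * diff_mean a m (Suc k) h
      + diff_mean a m (Suc k) (\<lambda>z. h (z - 2 * a k))) / 4"

lemma sign_mean_pair_eq_diff_mean:
  "sign_mean a m k (\<lambda>x. sign_mean a m k (\<lambda>y. H (x - y))) = diff_mean a m k H"
proof (induction m arbitrary: k H)
  case (Suc m)
  have "sign_mean a m (Suc k) (\<lambda>x. sign_mean a m (Suc k) (\<lambda>y. H (x - y + 2 * a k)))
      = diff_mean a m (Suc k) (\<lambda>z. H (z + 2 * a k))"
    "sign_mean a m (Suc k) (\<lambda>x. sign_mean a m (Suc k) (\<lambda>y. H (x - y - 2 * a k)))
      = diff_mean a m (Suc k) (\<lambda>z. H (z - 2 * a k))"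
    using Suc.IH[of "Suc k" "\<lambda>z. H (z + 2 * a k)"] Suc.IH[of "Suc k" "\<lambda>z. H (z - 2 * a k)"] by simp_all
  with Suc.IH[of "Suc k" H] show ?case
    by (simp add: sign_mean_add sign_mean_divide algebra_simps) (simp add: field_simps)
qed simp

lemma diff_mean_const: "diff_mean a m k (\<lambda>x. c) = c"
  by (induction m arbitrary: k) auto

lemma diff_mean_mono_on:
  assumes "\<And>i. 0 \<le> a i"
    and "\<And>x. \<bar>x\<bar> \<le> 2 * (\<Sum>i\<in>{k..<k+m}. a i) \<Longrightarrow> f x \<le> g x"
  shows "diff_mean a m k f \<le> diff_mean a m k g"
  using assms(2)
proof (induction m arbitrary: k f g)
  case (Suc m)
  have "diff_mean a m (Suc k) (\<lambda>x. f (x + 2 * a k)) \<le> diff_mean a m (Suc k) (\<lambda>x. g (x + 2 * a k))"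
    "diff_mean a m (Suc k) (\<lambda>x. f (x - 2 * a k)) \<le> diff_mean a m (Suc k) (\<lambda>x. g (x - 2 * a k))"
    "diff_mean a m (Suc k) f \<le> diff_mean a m (Suc k) g"
    by (rule Suc.IH, rule Suc.prems,
        use sum_atLeastLessThan_Suc_shift[where a=a and k=k and m=m] assms(1)[of k] in auto)+
  then show ?case by simp
qed simp

lemma diff_mean_reflect: "diff_mean a m k (\<lambda>x. f (- x)) = diff_mean a m k f"
proof (induction m arbitrary: k f)
  case (Suc m)
  have "diff_mean a m (Suc k) (\<lambda>x. f (- (x + 2 * a k))) = diff_mean a m (Suc k) (\<lambda>x. f (x - 2 * a k))"
    "diff_mean a m (Suc k) (\<lambda>x. f (- (x - 2 * a k))) = diff_mean a m (Suc k) (\<lambda>x. f (x + 2 * a k))"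
    using Suc.IH[of "Suc k" "\<lambda>x. f (x - 2 * a k)"] Suc.IH[of "Suc k" "\<lambda>x. f (x + 2 * a k)"]
    by (simp_all add: algebra_simps)
  with Suc.IH[of "Suc k" f] show ?case by simp
qed simp

lemma sign_mean_pair_ge_of_close:
  assumes "\<And>i. 0 \<le> a i" and "(\<Sum>i\<in>{k..<k+m}. a i) \<le> B"
    and "\<And>x y. \<bar>x - y\<bar> \<le> 2 * B \<Longrightarrow> \<psi> x \<le> \<Psi> x y"
  shows "sign_mean a m k \<psi> \<le> sign_mean a m k (\<lambda>x. sign_mean a m k (\<Psi> x))"
proof (rule sign_mean_mono_on[OF assms(1)])
  fix x assume x: "\<bar>x\<bar> \<le> (\<Sum>i\<in>{k..<k+m}. a i)"
  have "sign_mean a m k (\<lambda>y. \<psi> x) \<le> sign_mean a m k (\<Psi> x)"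
    by (rule sign_mean_mono_on[OF assms(1)], rule assms(3)) (use x assms(2) in linarith)
  then show "\<psi> x \<le> sign_mean a m k (\<Psi> x)"
    by (simp add: sign_mean_const)
qed

lemma sign_mean_pair_Suc_ge_diagonal:
  assumes "\<And>x y. 0 \<le> \<Psi> x y"
  shows "(sign_mean a m (Suc k) (\<lambda>x. sign_mean a m (Suc k) (\<lambda>y. \<Psi> (x + a k) (y + a k)))
      + sign_mean a m (Suc k) (\<lambda>x. sign_mean a m (Suc k) (\<lambda>y. \<Psi> (x - a k) (y - a k)))) / 4
    \<le> sign_mean a (Suc m) k (\<lambda>x. sign_mean a (Suc m) k (\<Psi> x))"
proof -
  define P where "P s s' = sign_mean a m (Suc k) (\<lambda>x. sign_mean a m (Suc k) (\<lambda>y. \<Psi> (s x) (s' y)))"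
    for s s' :: "real \<Rightarrow> real"
  have drop_cross: "(x + w) / 4 \<le> ((x + y) / 2 + (z + w) / 2) / 2" if "0 \<le> y" "0 \<le> z"
    for x y z w :: real
    using that by (simp add: field_simps)
  have "(P (\<lambda>x. x + a k) (\<lambda>y. y + a k) + P (\<lambda>x. x - a k) (\<lambda>y. y - a k)) / 4
      \<le> ((P (\<lambda>x. x + a k) (\<lambda>y. y + a k) + P (\<lambda>x. x - a k) (\<lambda>y. y + a k)) / 2
        + (P (\<lambda>x. x + a k) (\<lambda>y. y - a k) + P (\<lambda>x. x - a k) (\<lambda>y. y - a k)) / 2) / 2"
    by (rule drop_cross) (unfold P_def; intro sign_mean_nonneg assms)+
  also have "\<dots> = sign_mean a (Suc m) k (\<lambda>x. sign_mean a (Suc m) k (\<Psi> x))"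
    by (simp only: P_def sign_mean.simps(2) sign_mean_add sign_mean_divide)
  finally show ?thesis
    unfolding P_def .
qed

text \<open>Two independent sign sums share their first \<open>M - j\<close> signs with probability \<open>2\<^bsup>-(M-j)\<^esup>\<close>,
  and then differ by at most twice the tail bound \<open>B\<close>.\<close>

lemma sign_mean_pair_ge_cluster:
  assumes a: "\<And>i. 0 \<le> a i" and \<Psi>: "\<And>x y. 0 \<le> \<Psi> x y"
    and B: "\<And>n. (\<Sum>i\<in>{M..<M+n}. a i) \<le> B"
    and close: "\<And>x y. \<bar>x - y\<bar> \<le> 2 * B \<Longrightarrow> \<psi> x \<le> \<Psi> x y"
    and "j \<le> M" "M \<le> j + m"
  shows "sign_mean a m j \<psi> \<le> 2 ^ (M - j) * sign_mean a m j (\<lambda>x. sign_mean a m j (\<Psi> x))"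
  using assms(5,6) close \<Psi>
proof (induction m arbitrary: j \<psi> \<Psi>)
  case 0
  then show ?case using B[of 0] by simp
next
  case (Suc m)
  show ?case
  proof (cases "j = M")
    case True
    have "sign_mean a (Suc m) M \<psi> \<le> sign_mean a (Suc m) M (\<lambda>x. sign_mean a (Suc m) M (\<Psi> x))"
      by (rule sign_mean_pair_ge_of_close[OF a B]) (rule Suc.prems(3))
    then show ?thesis using True by (simp del: sign_mean.simps)
  next
    case False
    then have jM: "Suc j \<le> M" "M \<le> Suc j + m" using Suc.prems by auto
    define P where "P = (2::real) ^ (M - Suc j)"
    have "sign_mean a m (Suc j) (\<lambda>x. \<psi> (x + a j))
        \<le> P * sign_mean a m (Suc j) (\<lambda>x. sign_mean a m (Suc j) (\<lambda>y. \<Psi> (x + a j) (y + a j)))"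
      "sign_mean a m (Suc j) (\<lambda>x. \<psi> (x - a j))
        \<le> P * sign_mean a m (Suc j) (\<lambda>x. sign_mean a m (Suc j) (\<lambda>y. \<Psi> (x - a j) (y - a j)))"
      unfolding P_def by (rule Suc.IH[OF jM]; use Suc.prems in simp)+
    then have "sign_mean a (Suc m) j \<psi>
        \<le> (P * sign_mean a m (Suc j) (\<lambda>x. sign_mean a m (Suc j) (\<lambda>y. \<Psi> (x + a j) (y + a j)))
          + P * sign_mean a m (Suc j) (\<lambda>x. sign_mean a m (Suc j) (\<lambda>y. \<Psi> (x - a j) (y - a j)))) / 2"
      by simp
    also have "\<dots> = 2 * P * ((sign_mean a m (Suc j) (\<lambda>x. sign_mean a m (Suc j) (\<lambda>y. \<Psi> (x + a j) (y + a j)))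
          + sign_mean a m (Suc j) (\<lambda>x. sign_mean a m (Suc j) (\<lambda>y. \<Psi> (x - a j) (y - a j)))) / 4)"
      by (simp add: algebra_simps)
    also have "\<dots> \<le> 2 * P * sign_mean a (Suc m) j (\<lambda>x. sign_mean a (Suc m) j (\<Psi> x))"
      by (intro mult_left_mono sign_mean_pair_Suc_ge_diagonal Suc.prems) (simp add: P_def)
    also have "2 * P = 2 ^ (M - j)"
      using jM by (simp add: P_def Suc_diff_Suc flip: power_Suc)
    finally show ?thesis .
  qed
qed

section \<open>The Fejer kernel\<close>

lemma one_minus_cos_le: "1 - cos v \<le> (v::real)\<^sup>2 / 2"
proof -
  have "(sin (v / 2))\<^sup>2 \<le> (v / 2)\<^sup>2"
    using abs_sin_x_le_abs_x[of "v / 2"] by (metis power2_abs power_mono abs_ge_zero)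
  then show ?thesis
    using cos_double_sin[of "v / 2"] by (simp add: power_divide)
qed

lemma sin_ge_five_sixths:
  assumes "0 \<le> w" "w \<le> 1"
  shows "5 / 6 * w \<le> sin (w::real)"
proof -
  have "\<bar>sin w - (\<Sum>m<3. sin_coeff m * w ^ m)\<bar> \<le> inverse (fact 3) * \<bar>w\<bar> ^ 3"
    by (rule Maclaurin_sin_bound)
  moreover have "(\<Sum>m<3. sin_coeff m * w ^ m) = w"
    by (simp add: sin_coeff_def numeral_3_eq_3 lessThan_Suc)
  moreover have "w * (w * w) \<le> w * 1"
    using assms by (intro mult_left_mono) (auto simp: mult_le_one)
  then have "w ^ 3 \<le> w"
    by (simp add: power3_eq_cube mult.assoc)
  ultimately have "\<bar>sin w - w\<bar> * 6 \<le> w"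
    using assms(1) by (simp add: fact_numeral)
  then show ?thesis by (cases "sin w \<ge> w") (auto simp: abs_if)
qed

lemma one_minus_cos_ge:
  assumes "\<bar>v\<bar> \<le> 2"
  shows "(v::real)\<^sup>2 / 3 \<le> 1 - cos v"
proof -
  define w where "w = \<bar>v\<bar> / 2"
  have w: "0 \<le> w" "w \<le> 1" using assms by (auto simp: w_def)
  have "(5 / 6 * w)\<^sup>2 \<le> (sin w)\<^sup>2"
    using sin_ge_five_sixths[OF w] w by (intro power_mono) auto
  have "v\<^sup>2 / 3 = 4 / 3 * w\<^sup>2"
    unfolding w_def by (simp add: power2_eq_square)
  also have "\<dots> \<le> 2 * (sin w)\<^sup>2"
    using \<open>(5 / 6 * w)\<^sup>2 \<le> (sin w)\<^sup>2\<close>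
    by (simp add: power2_eq_square) (use mult_nonneg_nonneg[OF w(1) w(1)] in linarith)
  also have "\<dots> = 1 - cos v"
    using cos_double_sin[of "v / 2"] unfolding w_def
    by (cases "v \<ge> 0") (auto simp: power2_eq_square)
  finally show ?thesis .
qed

definition fejer :: "real \<Rightarrow> real \<Rightarrow> real" where
  "fejer T u = (if u = 0 then T\<^sup>2 / 2 else (1 - cos (T * u)) / u\<^sup>2)"

lemma fejer_nonneg: "0 \<le> fejer T u"
  by (simp add: fejer_def)

lemma fejer_minus: "fejer T (- u) = fejer T u"
  by (simp add: fejer_def)

lemma fejer_le: "fejer T u \<le> T\<^sup>2 / 2"
proof (cases "u = 0")
  case False
  have "1 - cos (T * u) \<le> (T * u)\<^sup>2 / 2" by (rule one_minus_cos_le)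
  then show ?thesis using False by (simp add: fejer_def divide_le_eq power_mult_distrib)
qed (simp add: fejer_def)

lemma square_mult_fejer_le: "u\<^sup>2 * fejer T u \<le> 2"
  by (simp add: fejer_def)

lemma fejer_le_inverse_square: "u \<noteq> 0 \<Longrightarrow> fejer T u \<le> 2 / u\<^sup>2"
  using square_mult_fejer_le[of u T] by (simp add: field_simps)

lemma fejer_ge:
  assumes "\<bar>T * u\<bar> \<le> 2"
  shows "T\<^sup>2 / 3 \<le> fejer T u"
proof (cases "u = 0")
  case False
  have "(T * u)\<^sup>2 / 3 \<le> 1 - cos (T * u)" by (rule one_minus_cos_ge[OF assms])
  then show ?thesis using False by (simp add: fejer_def le_divide_eq power_mult_distrib)
qed (simp add: fejer_def)

lemma has_integral_fejer:
  assumes "0 \<le> T"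
  shows "((\<lambda>t. (T - t) * cos (u * t)) has_integral fejer T u) {0..T}"
proof -
  define G where "G t = (if u = 0 then T * t - t\<^sup>2 / 2
    else (T - t) * sin (u * t) / u - cos (u * t) / u\<^sup>2)" for t
  have "(G has_real_derivative (T - t) * cos (u * t)) (at t)" for t
    unfolding G_def
    by (cases "u = 0") (auto intro!: derivative_eq_intros simp: field_simps power2_eq_square)
  then have "((\<lambda>t. (T - t) * cos (u * t)) has_integral (G T - G 0)) {0..T}"
    by (intro fundamental_theorem_of_calculus assms)
      (auto simp: has_real_derivative_iff_has_vector_derivative[symmetric]
        intro: has_field_derivative_at_within)
  moreover have "G T - G 0 = fejer T u"
    by (simp add: G_def fejer_def field_simps power2_eq_square)
  ultimately show ?thesis by simp
qed

lemma has_integral_fejer_cos_cos: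
  assumes "0 < T"
  shows "((\<lambda>t. (1 - t / T) * (cos (t * x) * cos (t * y))) has_integral
    (fejer T (x - y) + fejer T (x + y)) / (2 * T)) {0..T}"
proof -
  have "((\<lambda>t. ((T - t) * cos ((x - y) * t) + (T - t) * cos ((x + y) * t)) / (2 * T)) has_integral
      (fejer T (x - y) + fejer T (x + y)) / (2 * T)) {0..T}"
    using assms by (intro has_integral_divide has_integral_add has_integral_fejer) auto
  moreover have "((T - t) * cos ((x - y) * t) + (T - t) * cos ((x + y) * t)) / (2 * T)
      = (1 - t / T) * (cos (t * x) * cos (t * y))" for t
    using assms by (simp add: cos_times_cos field_simps)
  ultimately show ?thesis by simp
qed

section \<open>Derivatives of limits\<close>

lemma has_real_derivative_lim_of_summable_increments:
  fixes f f' :: "nat \<Rightarrow> real \<Rightarrow> real"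
  assumes der: "\<And>n t. (f n has_real_derivative f' n t) (at t)"
    and conv: "convergent (\<lambda>n. f n x\<^sub>0)"
    and inc: "\<And>K. \<exists>C. \<forall>n t. \<bar>t\<bar> < K \<longrightarrow> \<bar>f' (Suc n) t - f' n t\<bar> \<le> C * e n"
    and e: "summable e"
  shows "convergent (\<lambda>n. f' n t)"
    and "((\<lambda>t. lim (\<lambda>n. f n t)) has_real_derivative lim (\<lambda>n. f' n t)) (at t)"
proof -
  \<comment> \<open>\<open>f n\<close> is the partial sum of the telescoping series of the \<open>g n\<close>; the series of the
    derivatives \<open>g' n\<close> converges locally uniformly by the Weierstrass M-test.\<close>
  define g where "g n x = f (Suc n) x - f n x" for n x
  define g' where "g' n x = f' (Suc n) x - f' n x" for n x
  have telescope: "h n x = h 0 x + (\<Sum>i<n. h (Suc i) x - h i x)" for h :: "nat \<Rightarrow> real \<Rightarrow> real" and n x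
    using sum_lessThan_telescope[of "\<lambda>i. h i x" n] by simp
  have g'_bound: "\<exists>C. \<forall>n y. y \<in> ball 0 K \<longrightarrow> norm (g' n y) \<le> C * e n" for K
    using inc[of K] by (auto simp: g'_def)
  have "summable (\<lambda>n. g n x\<^sub>0)"
    using conv unfolding summable_iff_convergent g_def
    by (subst (asm) telescope) (simp add: convergent_add_const_iff)
  then have series: "summable (\<lambda>n. g n x) \<and> ((\<lambda>x. \<Sum>n. g n x) has_real_derivative (\<Sum>n. g' n x)) (at x)"
    for x
  proof -
    define K where "K = max \<bar>x\<bar> \<bar>x\<^sub>0\<bar> + 1"
    obtain C where C: "\<And>n y. y \<in> ball 0 K \<Longrightarrow> norm (g' n y) \<le> C * e n"
      using g'_bound by blast
    have "uniformly_convergent_on (ball 0 K) (\<lambda>n x. \<Sum>i<n. g' i x)"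
      by (rule Weierstrass_m_test'[OF C summable_mult[OF e]])
    moreover have "(g n has_field_derivative g' n y) (at y within ball 0 K)" for n y
      unfolding g_def g'_def by (rule has_field_derivative_at_within) (intro DERIV_diff der)
    moreover have "x\<^sub>0 \<in> ball 0 K" "x \<in> interior (ball 0 K)"
      by (auto simp: K_def)
    ultimately show ?thesis
      using has_field_derivative_series'[of "ball 0 K" g g' x\<^sub>0 x] \<open>summable (\<lambda>n. g n x\<^sub>0)\<close>
      by simp
  qed
  have "(\<lambda>n. f n x) \<longlonglongrightarrow> f 0 x + (\<Sum>n. g n x)" for x
    using series[of x] by (subst telescope) (auto simp: g_def intro!: tendsto_add summable_LIMSEQ)
  then have lim_f: "(\<lambda>t. lim (\<lambda>n. f n t)) = (\<lambda>x. f 0 x + (\<Sum>n. g n x))"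
    by (auto intro!: limI)
  obtain C where "\<forall>n y. y \<in> ball 0 (\<bar>t\<bar> + 1) \<longrightarrow> norm (g' n y) \<le> C * e n"
    using g'_bound by blast
  then have "\<And>n. norm (g' n t) \<le> C * e n"
    by simp
  then have "summable (\<lambda>n. g' n t)"
    by (rule summable_comparison_test'[OF summable_mult[OF e]])
  then have "(\<lambda>n. f' n t) \<longlonglongrightarrow> f' 0 t + (\<Sum>n. g' n t)"
    by (subst telescope) (auto simp: g'_def intro!: tendsto_add summable_LIMSEQ)
  then show "convergent (\<lambda>n. f' n t)" and
    "((\<lambda>t. lim (\<lambda>n. f n t)) has_real_derivative lim (\<lambda>n. f' n t)) (at t)"
    unfolding lim_f using series[of t] der[of 0 t]
    by (auto simp: convergent_def limI intro: DERIV_add)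
qed

section \<open>Lacunary sequences\<close>

text \<open>In the application \<open>a n = \<alpha> (n + 1)\<close>, so that \<open>tail n\<close> below is the \<open>R\<^sub>n\<close> of the statement.\<close>

locale lacunary =
  fixes a :: "nat \<Rightarrow> real"
  assumes pos: "\<And>n. 0 < a n"
    and summable: "summable a"
    and dominates_tail: "\<And>n. (\<Sum>i. a (i + Suc n)) < a n"
begin

definition tail :: "nat \<Rightarrow> real" where
  "tail n = (\<Sum>i. a (i + n))"

lemma nonneg: "0 \<le> a n"
  using pos[of n] by simp

lemma summable_tail: "summable (\<lambda>i. a (i + n))"
  using summable by simp

lemma tail_Suc: "tail n = a n + tail (Suc n)"
  using suminf_split_head[OF summable_tail[of n]] by (simp add: tail_def)

lemma tail_pos: "0 < tail n"
  unfolding tail_def by (rule suminf_pos[OF summable_tail pos])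

lemma tail_Suc_less: "tail (Suc n) < a n"
  using dominates_tail[of n] by (simp add: tail_def)

lemma tail_add_mult_pow2_le: "tail (n + d) * 2 ^ d \<le> tail n"
proof (induction d)
  case (Suc d)
  have "tail (n + Suc d) * 2 ^ Suc d = (2 * tail (Suc (n + d))) * 2 ^ d" by simp
  also have "\<dots> \<le> tail (n + d) * 2 ^ d"
    using tail_Suc[of "n + d"] tail_Suc_less[of "n + d"] by (intro mult_right_mono) simp_all
  finally show ?case using Suc.IH by linarith
qed simp

lemma sum_add_tail: "(\<Sum>i\<in>{n..<n+m}. a i) + tail (n + m) = tail n"
proof (induction m)
  case (Suc m)
  then show ?case using tail_Suc[of "n + m"] by simp
qed simp

lemma sum_le_tail: "(\<Sum>i\<in>{n..<n+m}. a i) \<le> tail n"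
  using sum_add_tail[of n m] tail_pos[of "n + m"] by simp

lemma tail_antimono: "m \<le> n \<Longrightarrow> tail n \<le> tail m"
  using sum_add_tail[of m "n - m"] sum_nonneg[of "{m..<n}" a] nonneg by simp

lemma a_le_tail: "a n \<le> tail 0"
  using tail_Suc[of n] tail_pos[of "Suc n"] tail_antimono[of 0 n] by linarith

lemma tail_LIMSEQ: "tail \<longlonglongrightarrow> 0"
proof (rule tendsto_sandwich[of "\<lambda>n. 0" _ _ "\<lambda>n. tail 0 * (1 / 2) ^ n"])
  show "\<forall>\<^sub>F n in sequentially. 0 \<le> tail n"
    using tail_pos by (simp add: less_imp_le)
  show "\<forall>\<^sub>F n in sequentially. tail n \<le> tail 0 * (1 / 2) ^ n"
    using tail_add_mult_pow2_le[of 0] by (simp add: field_simps power_divide)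
  show "(\<lambda>n. tail 0 * (1 / 2) ^ n) \<longlonglongrightarrow> 0"
    by (intro tendsto_mult_right_zero LIMSEQ_power_zero) simp
qed simp

lemma unique_scale:
  assumes "0 < T" "1 / T \<le> tail 0"
  shows "\<exists>!M. 1 \<le> M \<and> tail M < 1 / T \<and> 1 / T \<le> tail (M - 1)"
proof -
  obtain n where n: "tail n < 1 / T"
    using order_tendstoD(2)[OF tail_LIMSEQ, of "1 / T"] assms(1)
    by (auto simp: eventually_sequentially)
  define M where "M = (LEAST n. tail n < 1 / T)"
  have M: "tail M < 1 / T"
    unfolding M_def by (rule LeastI[of _ n]) (rule n)
  have M0: "M \<noteq> 0"
    using M assms(2) by (metis not_le)
  have "\<not> tail (M - 1) < 1 / T"
    using M0 unfolding M_def by (intro not_less_Least) (auto simp: M_def)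
  then have "1 \<le> M \<and> tail M < 1 / T \<and> 1 / T \<le> tail (M - 1)"
    using M M0 by simp
  moreover have "M' = M" if M': "1 \<le> M' \<and> tail M' < 1 / T \<and> 1 / T \<le> tail (M' - 1)" for M'
  proof (rule ccontr)
    assume "M' \<noteq> M"
    then consider "M' \<le> M - 1" | "M \<le> M' - 1" by linarith
    then show False
    proof cases
      case 1
      then show False using M' calculation tail_antimono[OF 1] by linarith
    next
      case 2
      then show False using M' calculation tail_antimono[OF 2] by linarith
    qed
  qed
  ultimately show ?thesis by blast
qed

lemma pow2_le_tail0_mult:
  assumes "0 < T" "1 \<le> M" "1 / T \<le> tail (M - 1)"
  shows "2 ^ M \<le> 2 * tail 0 * T"
proof -
  have "1 / T * 2 ^ (M - 1) \<le> tail 0"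
    using tail_add_mult_pow2_le[of 0 "M - 1"] assms(3)
    by (metis add_0 order_trans mult_right_mono zero_le_numeral zero_le_power)
  then have "2 ^ (M - 1) \<le> tail 0 * T"
    using assms(1) by (simp add: field_simps)
  moreover have "(2::real) ^ M = 2 * 2 ^ (M - 1)"
    using assms(2) by (simp flip: power_Suc)
  ultimately show ?thesis by simp
qed


subsection \<open>The covariance and its first two derivatives\<close>

lemma sign_mean_mono_on_tail0:
  "(\<And>x. \<bar>x\<bar> \<le> tail 0 \<Longrightarrow> f x \<le> g x) \<Longrightarrow> sign_mean a N 0 f \<le> sign_mean a N 0 g"
  by (rule sign_mean_mono_on[OF nonneg]) (use sum_le_tail[of 0 N] in auto)

lemma abs_sign_mean_le_on_tail0:
  "(\<And>x. \<bar>x\<bar> \<le> tail 0 \<Longrightarrow> \<bar>h x\<bar> \<le> B) \<Longrightarrow> \<bar>sign_mean a N 0 h\<bar> \<le> B"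
  by (rule sign_mean_abs_le[OF nonneg]) (use sum_le_tail[of 0 N] in auto)

definition chf :: "nat \<Rightarrow> real \<Rightarrow> real" where
  "chf N t = sign_mean a N 0 (\<lambda>x. cos (t * x))"

definition chf1 :: "nat \<Rightarrow> real \<Rightarrow> real" where
  "chf1 N t = sign_mean a N 0 (\<lambda>x. - x * sin (t * x))"

definition chf2 :: "nat \<Rightarrow> real \<Rightarrow> real" where
  "chf2 N t = sign_mean a N 0 (\<lambda>x. - x\<^sup>2 * cos (t * x))"

lemma chf_eq_prod: "chf N t = (\<Prod>i<N. cos (a i * t))"
  using sign_mean_cos[of a N 0 t 0] unfolding chf_def by (simp add: atLeast0LessThan)

lemma has_real_derivative_chf: "(chf N has_real_derivative chf1 N t) (at t)"
  unfolding chf_def chf1_def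
  by (rule has_real_derivative_sign_mean) (auto intro!: derivative_eq_intros)

lemma has_real_derivative_chf1: "(chf1 N has_real_derivative chf2 N t) (at t)"
  unfolding chf1_def chf2_def
  by (rule has_real_derivative_sign_mean) (auto intro!: derivative_eq_intros simp: power2_eq_square)

lemma isCont_chf2: "isCont (chf2 N) t"
proof -
  have "((\<lambda>t. sign_mean a N 0 (\<lambda>x. - x\<^sup>2 * cos (t * x)))
      has_real_derivative sign_mean a N 0 (\<lambda>x. x\<^sup>2 * (sin (t * x) * x))) (at t)"
    by (rule has_real_derivative_sign_mean) (auto intro!: derivative_eq_intros)
  then show ?thesis unfolding chf2_def by (rule DERIV_isCont)
qed

lemma abs_chf_le: "\<bar>chf N t\<bar> \<le> 1"
  unfolding chf_def by (rule abs_sign_mean_le_on_tail0) simp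

lemma abs_chf1_le: "\<bar>chf1 N t\<bar> \<le> tail 0"
  unfolding chf1_def
proof (rule abs_sign_mean_le_on_tail0)
  fix x :: real assume "\<bar>x\<bar> \<le> tail 0"
  moreover have "\<bar>x\<bar> * \<bar>sin (t * x)\<bar> \<le> \<bar>x\<bar> * 1" by (intro mult_left_mono) auto
  ultimately show "\<bar>- x * sin (t * x)\<bar> \<le> tail 0" by (simp add: abs_mult)
qed

lemma abs_chf2_le: "\<bar>chf2 N t\<bar> \<le> (tail 0)\<^sup>2"
  unfolding chf2_def
proof (rule abs_sign_mean_le_on_tail0)
  fix x :: real assume "\<bar>x\<bar> \<le> tail 0"
  then have "x\<^sup>2 \<le> (tail 0)\<^sup>2" by (metis abs_ge_zero power2_abs power_mono)
  moreover have "x\<^sup>2 * \<bar>cos (t * x)\<bar> \<le> x\<^sup>2 * 1" by (intro mult_left_mono) auto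
  ultimately show "\<bar>- x\<^sup>2 * cos (t * x)\<bar> \<le> (tail 0)\<^sup>2" by (simp add: abs_mult)
qed

lemma chf_Suc: "chf (Suc N) t = chf N t * cos (a N * t)"
  by (simp add: chf_eq_prod)

lemma chf1_Suc: "chf1 (Suc N) t = chf1 N t * cos (a N * t) - chf N t * (a N * sin (a N * t))"
proof -
  have "((\<lambda>t. chf N t * cos (a N * t)) has_real_derivative
      chf1 N t * cos (a N * t) - chf N t * (a N * sin (a N * t))) (at t)"
    by (auto intro!: derivative_eq_intros has_real_derivative_chf simp: algebra_simps)
  then show ?thesis
    using has_real_derivative_chf[of "Suc N" t] unfolding chf_Suc by (rule DERIV_unique[rotated])
qed

lemma chf2_Suc:
  "chf2 (Suc N) t = chf2 N t * cos (a N * t) - 2 * (chf1 N t * (a N * sin (a N * t)))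
    - chf N t * ((a N)\<^sup>2 * cos (a N * t))"
proof -
  have "((\<lambda>t. chf1 N t * cos (a N * t) - chf N t * (a N * sin (a N * t))) has_real_derivative
      chf2 N t * cos (a N * t) - 2 * (chf1 N t * (a N * sin (a N * t)))
      - chf N t * ((a N)\<^sup>2 * cos (a N * t))) (at t)"
    by (auto intro!: derivative_eq_intros has_real_derivative_chf has_real_derivative_chf1
        simp: algebra_simps power2_eq_square)
  then show ?thesis
    using has_real_derivative_chf1[of "Suc N" t] unfolding chf1_Suc by (rule DERIV_unique[rotated])
qed


lemma cos_sin_increment_le:
  assumes "\<bar>t\<bar> \<le> K"
  shows "\<bar>cos (a N * t) - 1\<bar> \<le> tail 0 * a N * K\<^sup>2 / 2"
    and "a N * \<bar>sin (a N * t)\<bar> \<le> tail 0 * (a N * K)"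
proof -
  have aN: "0 \<le> a N" "a N \<le> tail 0" "(a N)\<^sup>2 \<le> tail 0 * a N"
    using nonneg[of N] a_le_tail[of N] by (auto simp: power2_eq_square mult_right_mono)
  have "t\<^sup>2 \<le> K\<^sup>2"
    using power_mono[OF assms abs_ge_zero, of 2] by simp
  with aN have "(a N * t)\<^sup>2 \<le> tail 0 * a N * K\<^sup>2"
    by (auto simp: power_mult_distrib intro!: mult_mono)
  moreover have "\<bar>cos (a N * t) - 1\<bar> = 1 - cos (a N * t)"
    using cos_le_one[of "a N * t"] by simp
  ultimately show "\<bar>cos (a N * t) - 1\<bar> \<le> tail 0 * a N * K\<^sup>2 / 2"
    using one_minus_cos_le[of "a N * t"] by linarith
  have "\<bar>sin (a N * t)\<bar> \<le> a N * K"
    using abs_sin_x_le_abs_x[of "a N * t"] aN assms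
    by (auto simp: abs_mult intro: order_trans mult_left_mono)
  then show "a N * \<bar>sin (a N * t)\<bar> \<le> tail 0 * (a N * K)"
    using aN by (intro mult_mono) auto
qed

lemma abs_chf1_Suc_diff_le:
  assumes "\<bar>t\<bar> \<le> K"
  shows "\<bar>chf1 (Suc N) t - chf1 N t\<bar> \<le> ((tail 0)\<^sup>2 * K\<^sup>2 / 2 + tail 0 * K) * a N"
proof -
  note increment = cos_sin_increment_le[OF assms, of N]
  have "\<bar>chf1 (Suc N) t - chf1 N t\<bar>
      = \<bar>chf1 N t * (cos (a N * t) - 1) - chf N t * (a N * sin (a N * t))\<bar>"
    by (simp add: chf1_Suc algebra_simps)
  also have "\<dots> \<le> \<bar>chf1 N t\<bar> * \<bar>cos (a N * t) - 1\<bar> + \<bar>chf N t\<bar> * (a N * \<bar>sin (a N * t)\<bar>)"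
    using abs_triangle_ineq4[of "chf1 N t * (cos (a N * t) - 1)" "chf N t * (a N * sin (a N * t))"]
      nonneg[of N] by (simp add: abs_mult)
  also have "\<dots> \<le> tail 0 * (tail 0 * a N * K\<^sup>2 / 2) + 1 * (tail 0 * (a N * K))"
  proof (rule add_mono)
    show "\<bar>chf1 N t\<bar> * \<bar>cos (a N * t) - 1\<bar> \<le> tail 0 * (tail 0 * a N * K\<^sup>2 / 2)"
      by (rule mult_mono) (use abs_chf1_le[of N t] increment tail_pos[of 0] in auto)
    show "\<bar>chf N t\<bar> * (a N * \<bar>sin (a N * t)\<bar>) \<le> 1 * (tail 0 * (a N * K))"
      by (rule mult_mono) (use abs_chf_le[of N t] increment nonneg[of N] in auto)
  qed
  also have "\<dots> = ((tail 0)\<^sup>2 * K\<^sup>2 / 2 + tail 0 * K) * a N"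
    by (simp add: algebra_simps power2_eq_square)
  finally show ?thesis .
qed

lemma abs_chf2_Suc_diff_le:
  assumes "\<bar>t\<bar> \<le> K"
  shows "\<bar>chf2 (Suc N) t - chf2 N t\<bar> \<le> ((tail 0) ^ 3 * K\<^sup>2 / 2 + 2 * (tail 0)\<^sup>2 * K + tail 0) * a N"
proof -
  note increment = cos_sin_increment_le[OF assms, of N]
  have "(a N)\<^sup>2 * \<bar>cos (a N * t)\<bar> \<le> tail 0 * a N"
    using nonneg[of N] a_le_tail[of N] mult_left_mono[OF abs_cos_le_one[of "a N * t"], of "(a N)\<^sup>2"]
    by (simp add: power2_eq_square) (meson mult_right_mono order_trans)
  have "\<bar>chf2 (Suc N) t - chf2 N t\<bar> = \<bar>chf2 N t * (cos (a N * t) - 1)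
      - 2 * (chf1 N t * (a N * sin (a N * t))) - chf N t * ((a N)\<^sup>2 * cos (a N * t))\<bar>"
    by (simp add: chf2_Suc algebra_simps)
  also have "\<dots> \<le> \<bar>chf2 N t\<bar> * \<bar>cos (a N * t) - 1\<bar> + 2 * (\<bar>chf1 N t\<bar> * (a N * \<bar>sin (a N * t)\<bar>))
      + \<bar>chf N t\<bar> * ((a N)\<^sup>2 * \<bar>cos (a N * t)\<bar>)"
  proof -
    have "\<bar>x - y - z\<bar> \<le> \<bar>x\<bar> + \<bar>y\<bar> + \<bar>z\<bar>" for x y z :: real by arith
    from this[of "chf2 N t * (cos (a N * t) - 1)" "2 * (chf1 N t * (a N * sin (a N * t)))"
        "chf N t * ((a N)\<^sup>2 * cos (a N * t))"]
    show ?thesis using nonneg[of N] by (simp add: abs_mult)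
  qed
  also have "\<dots> \<le> (tail 0)\<^sup>2 * (tail 0 * a N * K\<^sup>2 / 2) + 2 * (tail 0 * (tail 0 * (a N * K)))
      + 1 * (tail 0 * a N)"
  proof (intro add_mono)
    show "\<bar>chf2 N t\<bar> * \<bar>cos (a N * t) - 1\<bar> \<le> (tail 0)\<^sup>2 * (tail 0 * a N * K\<^sup>2 / 2)"
      by (rule mult_mono) (use abs_chf2_le[of N t] increment tail_pos[of 0] in auto)
    show "2 * (\<bar>chf1 N t\<bar> * (a N * \<bar>sin (a N * t)\<bar>)) \<le> 2 * (tail 0 * (tail 0 * (a N * K)))"
      by (rule mult_left_mono, rule mult_mono)
        (use abs_chf1_le[of N t] increment tail_pos[of 0] nonneg[of N] in auto)
    show "\<bar>chf N t\<bar> * ((a N)\<^sup>2 * \<bar>cos (a N * t)\<bar>) \<le> 1 * (tail 0 * a N)"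
      by (rule mult_mono) (use abs_chf_le[of N t] \<open>(a N)\<^sup>2 * \<bar>cos (a N * t)\<bar> \<le> tail 0 * a N\<close> in auto)
  qed
  also have "\<dots> = ((tail 0) ^ 3 * K\<^sup>2 / 2 + 2 * (tail 0)\<^sup>2 * K + tail 0) * a N"
    by (simp add: algebra_simps power2_eq_square power3_eq_cube)
  finally show ?thesis .
qed


definition covar :: "real \<Rightarrow> real" where
  "covar t = (\<Prod>n. cos (a n * t))"

definition covar1 :: "real \<Rightarrow> real" where
  "covar1 t = lim (\<lambda>N. chf1 N t)"

definition covar2 :: "real \<Rightarrow> real" where
  "covar2 t = lim (\<lambda>N. chf2 N t)"

lemma chf_LIMSEQ: "(\<lambda>N. chf N t) \<longlonglongrightarrow> covar t"
proof -
  have "norm (norm (cos (a i * t) - 1)) \<le> (tail 0 * t\<^sup>2 / 2) * a i" for i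
    using cos_sin_increment_le(1)[of t "\<bar>t\<bar>" i] by (simp add: mult_ac)
  then have "summable (\<lambda>i. norm (cos (a i * t) - 1))"
    by (rule summable_comparison_test'[OF summable_mult[OF summable]])
  then have "convergent_prod (\<lambda>i. cos (a i * t))"
    by (intro abs_convergent_prod_imp_convergent_prod summable_imp_abs_convergent_prod)
  from convergent_prod_LIMSEQ[OF this] have "(\<lambda>N. \<Prod>i\<le>N. cos (a i * t)) \<longlonglongrightarrow> covar t"
    unfolding covar_def .
  then show ?thesis
    unfolding chf_eq_prod LIMSEQ_lessThan_iff_atMost .
qed

lemma
  shows has_real_derivative_covar: "(covar has_real_derivative covar1 t) (at t)"
    and has_real_derivative_covar1: "(covar1 has_real_derivative covar2 t) (at t)"
    and chf2_LIMSEQ: "(\<lambda>N. chf2 N t) \<longlonglongrightarrow> covar2 t"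
proof -
  have covar_lim: "covar = (\<lambda>t. lim (\<lambda>N. chf N t))"
    by (intro ext limI[OF chf_LIMSEQ, symmetric])
  have "convergent (\<lambda>N. chf N 0)" "convergent (\<lambda>N. chf1 N 0)"
    by (simp_all add: chf_def chf1_def sign_mean_const convergent_const)
  moreover have "\<exists>C. \<forall>N t. \<bar>t\<bar> < K \<longrightarrow> \<bar>chf1 (Suc N) t - chf1 N t\<bar> \<le> C * a N"
    "\<exists>C. \<forall>N t. \<bar>t\<bar> < K \<longrightarrow> \<bar>chf2 (Suc N) t - chf2 N t\<bar> \<le> C * a N" for K
    using abs_chf1_Suc_diff_le[of _ K] abs_chf2_Suc_diff_le[of _ K] by (meson less_imp_le)+
  ultimately have "(covar has_real_derivative covar1 t) (at t)"
    "(covar1 has_real_derivative covar2 t) (at t)" "convergent (\<lambda>N. chf2 N t)"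
    using has_real_derivative_lim_of_summable_increments
        [where f = chf and f' = chf1 and x\<^sub>0 = 0 and e = a, OF has_real_derivative_chf _ _ summable]
      has_real_derivative_lim_of_summable_increments
        [where f = chf1 and f' = chf2 and x\<^sub>0 = 0 and e = a, OF has_real_derivative_chf1 _ _ summable]
    unfolding covar_lim covar1_def[abs_def] covar2_def[abs_def] by blast+
  then show "(covar has_real_derivative covar1 t) (at t)" "(covar1 has_real_derivative covar2 t) (at t)"
    "(\<lambda>N. chf2 N t) \<longlonglongrightarrow> covar2 t"
    by (simp_all add: covar2_def convergent_LIMSEQ_iff)
qed

lemma deriv2_covar: "deriv (deriv covar) = covar2"
proof -
  have "deriv covar = covar1"
    using has_real_derivative_covar by (intro ext DERIV_imp_deriv)
  then show ?thesis
    using has_real_derivative_covar1 by (intro ext DERIV_imp_deriv) simp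
qed

definition sigma2 :: real where
  "sigma2 = (\<Sum>i. (a i)\<^sup>2)"

lemma summable_square: "summable (\<lambda>i. (a i)\<^sup>2)"
proof (rule summable_comparison_test'[OF summable_mult[OF summable, of "tail 0"]])
  show "norm ((a n)\<^sup>2) \<le> tail 0 * a n" for n
    using a_le_tail[of n] nonneg[of n] by (simp add: power2_eq_square mult_right_mono)
qed

lemma sigma2_pos: "0 < sigma2"
  unfolding sigma2_def using pos by (intro suminf_pos summable_square) (simp add: less_imp_neq[symmetric])

lemma covar2_0: "covar2 0 = - sigma2"
proof -
  have partial: "chf2 N 0 = - (\<Sum>i<N. (a i)\<^sup>2)" for N
    using sign_mean_cmult[of a N 0 "-1" "\<lambda>x. (x + 0)\<^sup>2"] sign_mean_square[of a N 0 0]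
    by (simp add: chf2_def atLeast0LessThan)
  have "(\<lambda>N. chf2 N 0) \<longlonglongrightarrow> - sigma2"
    unfolding partial sigma2_def by (intro tendsto_minus summable_LIMSEQ summable_square)
  then show ?thesis using chf2_LIMSEQ LIMSEQ_unique by blast
qed


subsection \<open>The energy as a double average of the Fejer kernel\<close>

definition weight :: "real \<Rightarrow> real" where
  "weight x = 1 - x\<^sup>2 / sigma2"

definition wchf :: "nat \<Rightarrow> real \<Rightarrow> real" where
  "wchf N t = chf N t + chf2 N t / sigma2"

lemma wchf_eq_sign_mean: "wchf N t = sign_mean a N 0 (\<lambda>x. weight x * cos (t * x))"
proof -
  have "wchf N t = sign_mean a N 0 (\<lambda>x. cos (t * x) + (- x\<^sup>2 * cos (t * x)) / sigma2)"
    unfolding wchf_def chf_def chf2_def by (simp only: sign_mean_add sign_mean_divide)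
  then show ?thesis
    unfolding weight_def by (simp add: algebra_simps)
qed

lemma wchf_square:
  "(wchf N t)\<^sup>2 = sign_mean a N 0 (\<lambda>x. sign_mean a N 0 (\<lambda>y.
    weight x * weight y * (cos (t * x) * cos (t * y))))"
  unfolding wchf_eq_sign_mean power2_eq_square
  by (simp add: sign_mean_cmult[symmetric] mult_ac)

definition energy_trunc :: "nat \<Rightarrow> real \<Rightarrow> real" where
  "energy_trunc N T = T * integral {0..T} (\<lambda>t. (1 - t / T) * (wchf N t)\<^sup>2)"

definition energy :: "real \<Rightarrow> real" where
  "energy T = T * integral {0..T} (\<lambda>t. (1 - t / T) * (covar t + covar2 t / sigma2)\<^sup>2)"

lemma energy_trunc_eq:
  assumes "0 < T"
  shows "energy_trunc N T = sign_mean a N 0 (\<lambda>x. sign_mean a N 0 (\<lambda>y.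
    weight x * weight y * fejer T (x - y)))"
proof -
  let ?F = "\<lambda>x y. weight x * weight y * ((fejer T (x - y) + fejer T (x + y)) / (2 * T))"
  have "((\<lambda>t. (1 - t / T) * (weight x * weight y * (cos (t * x) * cos (t * y)))) has_integral ?F x y) {0..T}"
    for x y
    using has_integral_mult_right[OF has_integral_fejer_cos_cos[OF assms, of x y], of "weight x * weight y"]
    by (simp add: mult_ac)
  then have "((\<lambda>t. sign_mean a N 0 (\<lambda>x. sign_mean a N 0 (\<lambda>y.
      (1 - t / T) * (weight x * weight y * (cos (t * x) * cos (t * y))))))
      has_integral sign_mean a N 0 (\<lambda>x. sign_mean a N 0 (?F x))) {0..T}"
    by (intro has_integral_sign_mean)
  then have integral: "((\<lambda>t. (1 - t / T) * (wchf N t)\<^sup>2) has_integral sign_mean a N 0 (\<lambda>x. sign_mean a N 0 (?F x))) {0..T}"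
    by (simp only: wchf_square sign_mean_cmult)
  have "energy_trunc N T = sign_mean a N 0 (\<lambda>x. sign_mean a N 0 (\<lambda>y. T * ?F x y))"
    unfolding energy_trunc_def integral_unique[OF integral] by (simp only: sign_mean_cmult[symmetric])
  also have "\<dots> = sign_mean a N 0 (\<lambda>x. (sign_mean a N 0 (\<lambda>y. weight x * weight y * fejer T (x - y))
      + sign_mean a N 0 (\<lambda>y. weight x * weight y * fejer T (x + y))) / 2)"
  proof -
    have "T * ?F x y = (weight x * weight y * fejer T (x - y) + weight x * weight y * fejer T (x + y)) / 2"
      for x y
      using assms by (simp add: field_simps)
    then show ?thesis by (simp only: sign_mean_add sign_mean_divide)
  qed
  also have "\<dots> = sign_mean a N 0 (\<lambda>x. sign_mean a N 0 (\<lambda>y. weight x * weight y * fejer T (x - y)))"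
    using sign_mean_reflect[of a N 0 "\<lambda>y. weight x * weight y * fejer T (x + y)" for x]
    by (simp add: weight_def)
  finally show ?thesis .
qed

lemma energy_trunc_LIMSEQ:
  assumes "0 < T"
  shows "(\<lambda>N. energy_trunc N T) \<longlonglongrightarrow> energy T"
proof -
  let ?f = "\<lambda>N t. (1 - t / T) * (wchf N t)\<^sup>2"
  have "continuous_on {0..T} (?f N)" for N
    unfolding wchf_def
    by (intro continuous_at_imp_continuous_on ballI continuous_intros
        DERIV_isCont[OF has_real_derivative_chf] isCont_chf2)
      (use sigma2_pos assms in auto)
  then have "?f N integrable_on {0..T}" for N
    by (rule integrable_continuous_interval)
  moreover have "norm (?f N t) \<le> (1 + (tail 0)\<^sup>2 / sigma2)\<^sup>2" if "t \<in> {0..T}" for N t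
  proof -
    have "\<bar>chf2 N t / sigma2\<bar> \<le> (tail 0)\<^sup>2 / sigma2"
      using abs_chf2_le[of N t] sigma2_pos by (simp add: divide_right_mono)
    then have "\<bar>wchf N t\<bar> \<le> 1 + (tail 0)\<^sup>2 / sigma2"
      unfolding wchf_def using abs_chf_le[of N t] by linarith
    then have "(wchf N t)\<^sup>2 \<le> (1 + (tail 0)\<^sup>2 / sigma2)\<^sup>2"
      by (metis abs_ge_zero power2_abs power_mono)
    moreover have "0 \<le> 1 - t / T" "1 - t / T \<le> 1"
      using that assms by auto
    ultimately have "(1 - t / T) * (wchf N t)\<^sup>2 \<le> 1 * (1 + (tail 0)\<^sup>2 / sigma2)\<^sup>2"
      by (intro mult_mono) auto
    moreover have "0 \<le> (1 - t / T) * (wchf N t)\<^sup>2"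
      using \<open>0 \<le> 1 - t / T\<close> by simp
    ultimately show ?thesis
      by simp
  qed
  moreover have "(\<lambda>N. ?f N t) \<longlonglongrightarrow> (1 - t / T) * (covar t + covar2 t / sigma2)\<^sup>2" for t
    unfolding wchf_def by (intro tendsto_intros chf_LIMSEQ chf2_LIMSEQ) (use sigma2_pos in auto)
  ultimately have "(\<lambda>N. integral {0..T} (?f N))
      \<longlonglongrightarrow> integral {0..T} (\<lambda>t. (1 - t / T) * (covar t + covar2 t / sigma2)\<^sup>2)"
    by (intro dominated_convergence(2)[where h = "\<lambda>t. (1 + (tail 0)\<^sup>2 / sigma2)\<^sup>2"]) auto
  then show ?thesis
    unfolding energy_trunc_def energy_def by (intro tendsto_mult_left)
qed


subsection \<open>Upper bound\<close>

lemma abs_weight_le: "\<bar>x\<bar> \<le> tail 0 \<Longrightarrow> \<bar>weight x\<bar> \<le> 1 + (tail 0)\<^sup>2 / sigma2"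
proof -
  assume "\<bar>x\<bar> \<le> tail 0"
  then have "x\<^sup>2 \<le> (tail 0)\<^sup>2"
    by (metis abs_ge_zero power2_abs power_mono)
  then have "x\<^sup>2 / sigma2 \<le> (tail 0)\<^sup>2 / sigma2"
    using sigma2_pos by (intro divide_right_mono) auto
  moreover have "0 \<le> x\<^sup>2 / sigma2"
    using sigma2_pos by simp
  ultimately show ?thesis
    unfolding weight_def by (simp add: abs_le_iff)
qed

context
  fixes T :: real and M :: nat
  assumes T_pos: "0 < T" and M_pos: "1 \<le> M" and scale: "1 / T \<le> tail (M - 1)"
begin

lemma fejer_le_of_far:
  assumes "2 * tail (Suc j) \<le> \<bar>u\<bar>"
  shows "fejer T u \<le> 5 * T\<^sup>2 * 3 ^ j / 3 ^ M"
proof (cases "j + 2 \<le> M")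
  case True
  then obtain d where d: "M = j + 2 + d" using le_Suc_ex by blast
  define R where "R = tail (Suc j)"
  have R: "0 < R" using tail_pos by (simp add: R_def)
  have "1 / T * 2 ^ d \<le> R"
    using tail_add_mult_pow2_le[of "Suc j" d] scale d mult_right_mono[OF scale, of "2 ^ d"]
    by (simp add: R_def)
  then have "(2 ^ d)\<^sup>2 \<le> (T * R)\<^sup>2"
    using T_pos by (intro power_mono) (auto simp: field_simps)
  moreover have "((2::real) ^ d)\<^sup>2 = 4 ^ d"
    by (simp add: power2_eq_square power_mult_distrib[symmetric])
  ultimately have "4 ^ d \<le> T\<^sup>2 * R\<^sup>2"
    by (simp add: power_mult_distrib)
  have "fejer T u \<le> 2 / u\<^sup>2"
    using assms R by (intro fejer_le_inverse_square) (auto simp: R_def)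
  also have "\<dots> \<le> 2 / (2 * R)\<^sup>2"
    using power_mono[OF assms, of 2] R unfolding R_def[symmetric]
    by (intro divide_left_mono) (auto intro!: mult_pos_pos)
  also have "\<dots> \<le> T\<^sup>2 / (2 * 4 ^ d)"
    using \<open>4 ^ d \<le> T\<^sup>2 * R\<^sup>2\<close> R by (simp add: field_simps)
  also have "\<dots> \<le> 5 * T\<^sup>2 * 3 ^ j / 3 ^ M"
  proof -
    have "(3::real) ^ d \<le> 4 ^ d"
      by (rule power_mono) auto
    then have "9 * (3::real) ^ d \<le> 10 * 4 ^ d"
      using zero_le_power[of "4::real" d] by linarith
    then show ?thesis
      unfolding d using T_pos by (simp add: field_simps power_add)
  qed
  finally show ?thesis .
next
  case False
  then have "(3::real) ^ M \<le> 3 * 3 ^ j"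
    using power_increasing[of M "Suc j" "3::real"] by simp
  then have "(3::real) ^ M \<le> 10 * 3 ^ j"
    using zero_le_power[of "3::real" j] by linarith
  then have "T\<^sup>2 / 2 \<le> 5 * T\<^sup>2 * 3 ^ j / 3 ^ M"
    using T_pos by (simp add: field_simps)
  then show ?thesis using fejer_le[of T u] by linarith
qed

lemma diff_mean_fejer_le_of_far:
  assumes "\<And>z. \<bar>z\<bar> \<le> 2 * tail (Suc j) \<Longrightarrow> 2 * tail (Suc j) \<le> \<bar>f z\<bar>"
  shows "diff_mean a m (Suc j) (\<lambda>z. fejer T (f z)) \<le> 5 * T\<^sup>2 * 3 ^ j / 3 ^ M"
proof -
  have "diff_mean a m (Suc j) (\<lambda>z. fejer T (f z)) \<le> diff_mean a m (Suc j) (\<lambda>z. 5 * T\<^sup>2 * 3 ^ j / 3 ^ M)"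
    by (rule diff_mean_mono_on[OF nonneg], rule fejer_le_of_far, rule assms)
      (use sum_le_tail[of "Suc j" m] in auto)
  then show ?thesis by (simp add: diff_mean_const)
qed

lemma diff_mean_fejer_shift_le:
  assumes "0 < b" "2 * tail j < b"
  shows "diff_mean a m j (\<lambda>z. fejer T (b + z)) \<le> 15 * T\<^sup>2 * 3 ^ j / 3 ^ M"
  using assms
proof (induction m arbitrary: j b)
  case 0
  have "2 * tail (Suc j) \<le> \<bar>b\<bar>"
    using 0 tail_Suc[of j] pos[of j] by simp
  then have "fejer T b \<le> 5 * T\<^sup>2 * 3 ^ j / 3 ^ M"
    by (rule fejer_le_of_far)
  also have "\<dots> \<le> 15 * T\<^sup>2 * 3 ^ j / 3 ^ M"
    by (intro divide_right_mono mult_right_mono) auto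
  finally show ?case by simp
next
  case (Suc m)
  define K where "K = 5 * T\<^sup>2 * 3 ^ j / 3 ^ M"
  have "diff_mean a m (Suc j) (\<lambda>z. fejer T (b + (z + 2 * a j))) \<le> K"
    "diff_mean a m (Suc j) (\<lambda>z. fejer T (b + z)) \<le> K"
    unfolding K_def
    by (rule diff_mean_fejer_le_of_far; use Suc.prems tail_Suc[of j] tail_Suc_less[of j] in simp)+
  \<comment> \<open>Only the compensating branch, of weight \<open>1/4\<close>, can approach 0; it keeps the invariant
    \<open>b > 2 tail j\<close> one level down at the cost of a factor 3, and \<open>(K + 2K + 9K)/4 = 3K\<close>.\<close>
  moreover have "diff_mean a m (Suc j) (\<lambda>z. fejer T (b + (z - 2 * a j))) \<le> 9 * K"
    using Suc.IH[where j = "Suc j" and b = "b - 2 * a j"] Suc.prems tail_Suc[of j] tail_pos[of "Suc j"]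
    by (simp add: K_def algebra_simps)
  ultimately have "diff_mean a (Suc m) j (\<lambda>z. fejer T (b + z)) \<le> (K + 2 * K + 9 * K) / 4"
    by simp
  also have "\<dots> = 15 * T\<^sup>2 * 3 ^ j / 3 ^ M"
    by (simp add: K_def)
  finally show ?case .
qed

text \<open>The subtracted term pays for the two branches in which the signs at index \<open>j\<close> disagree,
  each bounded by \<open>diff_mean_fejer_shift_le\<close>; the agreeing branch halves the main term.\<close>

lemma diff_mean_fejer_le:
  assumes "j \<le> M" "M \<le> j + m"
  shows "diff_mean a m j (fejer T) \<le> 46 * T\<^sup>2 * 2 ^ j / 2 ^ M - 45 * T\<^sup>2 * 3 ^ j / 3 ^ M"
  using assms
proof (induction m arbitrary: j)
  case 0
  then show ?case by (simp add: fejer_def)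
next
  case (Suc m)
  show ?case
  proof (cases "j = M")
    case True
    have "diff_mean a (Suc m) j (fejer T) \<le> diff_mean a (Suc m) j (\<lambda>z. T\<^sup>2 / 2)"
      by (rule diff_mean_mono_on[OF nonneg]) (rule fejer_le)
    then have "diff_mean a (Suc m) j (fejer T) \<le> T\<^sup>2 / 2"
      by (simp only: diff_mean_const)
    moreover have "46 * T\<^sup>2 * 2 ^ j / 2 ^ M - 45 * T\<^sup>2 * 3 ^ j / 3 ^ M = T\<^sup>2"
      using True by simp
    ultimately show ?thesis
      using zero_le_power2[of T] by linarith
  next
    case False
    then have jM: "Suc j \<le> M" "M \<le> Suc j + m" using Suc.prems by auto
    have far: "2 * tail (Suc j) < 2 * a j" "0 < 2 * a j"
      using tail_Suc_less[of j] pos[of j] by auto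
    define K where "K = 15 * T\<^sup>2 * 3 ^ Suc j / 3 ^ M"
    have "diff_mean a m (Suc j) (\<lambda>z. fejer T (z + 2 * a j)) \<le> K"
      using diff_mean_fejer_shift_le[OF far(2,1), of m] by (simp add: K_def add.commute)
    moreover have "fejer T (- z - 2 * a j) = fejer T (2 * a j + z)" for z
      using fejer_minus[of T "2 * a j + z"] by (simp add: algebra_simps)
    then have "diff_mean a m (Suc j) (\<lambda>z. fejer T (z - 2 * a j)) \<le> K"
      using diff_mean_reflect[of a m "Suc j" "\<lambda>z. fejer T (z - 2 * a j)"]
        diff_mean_fejer_shift_le[OF far(2,1), of m] by (simp add: K_def)
    moreover have "diff_mean a m (Suc j) (fejer T)
        \<le> 46 * T\<^sup>2 * 2 ^ Suc j / 2 ^ M - 45 * T\<^sup>2 * 3 ^ Suc j / 3 ^ M"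
      by (rule Suc.IH[OF jM])
    ultimately have "diff_mean a (Suc m) j (fejer T)
        \<le> (K + 2 * (46 * T\<^sup>2 * 2 ^ Suc j / 2 ^ M - 45 * T\<^sup>2 * 3 ^ Suc j / 3 ^ M) + K) / 4"
      by simp
    also have "\<dots> = 46 * T\<^sup>2 * 2 ^ j / 2 ^ M - 45 * T\<^sup>2 * 3 ^ j / 3 ^ M"
      by (simp add: K_def field_simps)
    finally show ?thesis .
  qed
qed

lemma energy_trunc_le:
  assumes "M \<le> N"
  shows "energy_trunc N T \<le> 46 * (1 + (tail 0)\<^sup>2 / sigma2)\<^sup>2 * T\<^sup>2 / 2 ^ M"
proof -
  define G where "G = 1 + (tail 0)\<^sup>2 / sigma2"
  have "0 \<le> G"
    unfolding G_def using sigma2_pos by (simp add: add_nonneg_nonneg)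
  have "energy_trunc N T \<le> sign_mean a N 0 (\<lambda>x. sign_mean a N 0 (\<lambda>y. G\<^sup>2 * fejer T (x - y)))"
    unfolding energy_trunc_eq[OF T_pos]
  proof (intro sign_mean_mono_on_tail0 mult_right_mono fejer_nonneg)
    fix x y :: real
    assume "\<bar>x\<bar> \<le> tail 0" "\<bar>y\<bar> \<le> tail 0"
    then have "\<bar>weight x\<bar> * \<bar>weight y\<bar> \<le> G * G"
      using \<open>0 \<le> G\<close> unfolding G_def by (intro mult_mono abs_weight_le) auto
    then show "weight x * weight y \<le> G\<^sup>2"
      by (simp add: power2_eq_square abs_mult[symmetric])
  qed
  also have "\<dots> = G\<^sup>2 * diff_mean a N 0 (fejer T)"
    by (simp only: sign_mean_cmult sign_mean_pair_eq_diff_mean)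
  also have "\<dots> \<le> G\<^sup>2 * (46 * T\<^sup>2 / 2 ^ M)"
  proof (rule mult_left_mono)
    have "diff_mean a N 0 (fejer T) \<le> 46 * T\<^sup>2 / 2 ^ M - 45 * T\<^sup>2 / 3 ^ M"
      using diff_mean_fejer_le[of 0 N] assms by simp
    moreover have "0 \<le> 45 * T\<^sup>2 / 3 ^ M"
      by simp
    ultimately show "diff_mean a N 0 (fejer T) \<le> 46 * T\<^sup>2 / 2 ^ M"
      by linarith
  qed simp
  finally show ?thesis
    by (simp add: G_def mult_ac)
qed

lemma energy_le: "energy T \<le> 46 * (1 + (tail 0)\<^sup>2 / sigma2)\<^sup>2 * T\<^sup>2 / 2 ^ M"
proof (rule tendsto_upperbound[OF energy_trunc_LIMSEQ[OF T_pos]])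
  show "\<forall>\<^sub>F N in sequentially. energy_trunc N T \<le> 46 * (1 + (tail 0)\<^sup>2 / sigma2)\<^sup>2 * T\<^sup>2 / 2 ^ M"
    using eventually_ge_at_top[of M] by (rule eventually_mono) (rule energy_trunc_le)
qed simp

end


subsection \<open>Lower bound\<close>

lemma summable_power4: "summable (\<lambda>i. a i ^ 4)"
proof (rule summable_comparison_test'[OF summable_mult[OF summable_square, of "(tail 0)\<^sup>2"]])
  fix n
  have "(a n)\<^sup>2 * (a n)\<^sup>2 \<le> (tail 0)\<^sup>2 * (a n)\<^sup>2"
    by (intro mult_right_mono power_mono a_le_tail nonneg) simp
  then show "norm (a n ^ 4) \<le> (tail 0)\<^sup>2 * (a n)\<^sup>2"
    using nonneg[of n] by (simp add: power4_eq_xxxx power2_eq_square mult.assoc abs_mult)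
qed

lemma sum_power4_less: "(\<Sum>i. a i ^ 4) < sigma2\<^sup>2"
proof -
  have "a i \<le> a 0" for i
  proof (cases i)
    case (Suc j)
    have "a i \<le> tail i" using tail_Suc[of i] tail_pos[of "Suc i"] by simp
    also have "\<dots> \<le> tail 1" using tail_antimono[of 1 i] Suc by simp
    also have "\<dots> < a 0" using tail_Suc_less[of 0] by simp
    finally show ?thesis by simp
  qed simp
  then have "(a i)\<^sup>2 * (a i)\<^sup>2 \<le> (a 0)\<^sup>2 * (a i)\<^sup>2" for i
    by (intro mult_right_mono power_mono nonneg) simp_all
  then have "a i ^ 4 \<le> (a 0)\<^sup>2 * (a i)\<^sup>2" for i
    by (simp add: power4_eq_xxxx power2_eq_square mult.assoc)
  then have "(\<Sum>i. a i ^ 4) \<le> (a 0)\<^sup>2 * sigma2"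
    unfolding sigma2_def suminf_mult[OF summable_square, symmetric]
    by (intro suminf_le summable_power4 summable_mult summable_square)
  also have "\<dots> < sigma2 * sigma2"
  proof (rule mult_strict_right_mono[OF _ sigma2_pos])
    have "sigma2 = (a 0)\<^sup>2 + (\<Sum>i. (a (Suc i))\<^sup>2)"
      unfolding sigma2_def using suminf_split_head[OF summable_square] by simp
    moreover have "0 < (\<Sum>i. (a (Suc i))\<^sup>2)"
      using pos summable_square summable_Suc_iff[of "\<lambda>i. (a i)\<^sup>2"]
      by (intro suminf_pos) (auto simp: less_imp_neq[symmetric])
    ultimately show "(a 0)\<^sup>2 < sigma2" by simp
  qed
  finally show ?thesis by (simp add: power2_eq_square)
qed

lemma sign_mean_weight_square:
  "sign_mean a N 0 (\<lambda>x. (weight x)\<^sup>2) = 1 - 2 * (\<Sum>i<N. (a i)\<^sup>2) / sigma2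
    + (3 * (\<Sum>i<N. (a i)\<^sup>2)\<^sup>2 - 2 * (\<Sum>i<N. a i ^ 4)) / sigma2\<^sup>2"
proof -
  have "(\<lambda>x. (weight x)\<^sup>2) = (\<lambda>x. 1 + ((-2 / sigma2) * (x + 0)\<^sup>2 + (1 / sigma2\<^sup>2) * (x + 0) ^ 4))"
    using sigma2_pos by (intro ext) (simp add: weight_def power2_eq_square power4_eq_xxxx field_simps)
  then show ?thesis
    by (simp only: sign_mean_add sign_mean_cmult sign_mean_const sign_mean_square sign_mean_power4)
      (simp add: atLeast0LessThan field_simps)
qed

lemma sign_mean_weight_square_LIMSEQ:
  "(\<lambda>N. sign_mean a N 0 (\<lambda>x. (weight x)\<^sup>2)) \<longlonglongrightarrow> 2 * (1 - (\<Sum>i. a i ^ 4) / sigma2\<^sup>2)"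
proof -
  have "(\<lambda>N. 1 - 2 * (\<Sum>i<N. (a i)\<^sup>2) / sigma2 + (3 * (\<Sum>i<N. (a i)\<^sup>2)\<^sup>2 - 2 * (\<Sum>i<N. a i ^ 4)) / sigma2\<^sup>2)
      \<longlonglongrightarrow> 1 - 2 * sigma2 / sigma2 + (3 * sigma2\<^sup>2 - 2 * (\<Sum>i. a i ^ 4)) / sigma2\<^sup>2"
    unfolding sigma2_def
    by (intro tendsto_intros summable_LIMSEQ summable_square summable_power4)
      (use sigma2_pos in \<open>auto simp: sigma2_def\<close>)
  moreover have "1 - 2 * sigma2 / sigma2 + (3 * sigma2\<^sup>2 - 2 * (\<Sum>i. a i ^ 4)) / sigma2\<^sup>2
      = 2 * (1 - (\<Sum>i. a i ^ 4) / sigma2\<^sup>2)"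
    using sigma2_pos by (simp add: field_simps power2_eq_square)
  ultimately show ?thesis
    unfolding sign_mean_weight_square using sigma2_pos by simp
qed

lemma sign_mean_pair_weight_diff_le:
  "sign_mean a N 0 (\<lambda>x. sign_mean a N 0 (\<lambda>y. (weight x - weight y)\<^sup>2 * fejer T (x - y)))
    \<le> 8 * (tail 0)\<^sup>2 / sigma2\<^sup>2"
proof -
  have "sign_mean a N 0 (\<lambda>x. sign_mean a N 0 (\<lambda>y. (weight x - weight y)\<^sup>2 * fejer T (x - y)))
      \<le> sign_mean a N 0 (\<lambda>x. sign_mean a N 0 (\<lambda>y. 8 * (tail 0)\<^sup>2 / sigma2\<^sup>2))"
  proof (intro sign_mean_mono_on_tail0)
    fix x y :: real
    assume "\<bar>x\<bar> \<le> tail 0" "\<bar>y\<bar> \<le> tail 0"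
    then have "\<bar>x + y\<bar> \<le> 2 * tail 0"
      by linarith
    from power_mono[OF this abs_ge_zero, of 2] have "(x + y)\<^sup>2 \<le> (2 * tail 0)\<^sup>2"
      by simp
    have "(weight x - weight y)\<^sup>2 = (x + y)\<^sup>2 / sigma2\<^sup>2 * (x - y)\<^sup>2"
      using sigma2_pos by (simp add: weight_def power2_eq_square field_simps)
    then have "(weight x - weight y)\<^sup>2 * fejer T (x - y)
        = (x + y)\<^sup>2 / sigma2\<^sup>2 * ((x - y)\<^sup>2 * fejer T (x - y))"
      by (simp only: mult.assoc)
    also have "\<dots> \<le> (2 * tail 0)\<^sup>2 / sigma2\<^sup>2 * ((x - y)\<^sup>2 * fejer T (x - y))"
      by (intro mult_right_mono divide_right_mono \<open>(x + y)\<^sup>2 \<le> (2 * tail 0)\<^sup>2\<close>)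
        (simp_all add: fejer_nonneg)
    also have "\<dots> \<le> (2 * tail 0)\<^sup>2 / sigma2\<^sup>2 * 2"
      by (intro mult_left_mono square_mult_fejer_le) simp
    finally show "(weight x - weight y)\<^sup>2 * fejer T (x - y) \<le> 8 * (tail 0)\<^sup>2 / sigma2\<^sup>2"
      by (simp add: power2_eq_square)
  qed
  then show ?thesis by (simp only: sign_mean_const)
qed

lemma sign_mean_pair_weight_square_ge:
  assumes "0 < T" "tail M < 1 / T" "M \<le> N"
  shows "T\<^sup>2 / 3 * sign_mean a N 0 (\<lambda>x. (weight x)\<^sup>2)
    \<le> 2 ^ M * sign_mean a N 0 (\<lambda>x. sign_mean a N 0 (\<lambda>y. (weight x)\<^sup>2 * fejer T (x - y)))"
proof -
  have "sign_mean a N 0 (\<lambda>x. T\<^sup>2 / 3 * (weight x)\<^sup>2)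
      \<le> 2 ^ (M - 0) * sign_mean a N 0 (\<lambda>x. sign_mean a N 0 (\<lambda>y. (weight x)\<^sup>2 * fejer T (x - y)))"
  proof (rule sign_mean_pair_ge_cluster[OF nonneg _ sum_le_tail])
    show "T\<^sup>2 / 3 * (weight x)\<^sup>2 \<le> (weight x)\<^sup>2 * fejer T (x - y)" if "\<bar>x - y\<bar> \<le> 2 * tail M" for x y
    proof -
      have "\<bar>T * (x - y)\<bar> \<le> T * (2 * tail M)"
        using that assms(1) by (simp add: abs_mult)
      also have "\<dots> \<le> 2"
        using assms(1,2) by (simp add: field_simps)
      finally have "T\<^sup>2 / 3 \<le> fejer T (x - y)"
        by (rule fejer_ge)
      then have "T\<^sup>2 / 3 * (weight x)\<^sup>2 \<le> fejer T (x - y) * (weight x)\<^sup>2"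
        by (rule mult_right_mono) simp
      then show ?thesis
        by (simp add: mult.commute)
    qed
  qed (use assms(3) fejer_nonneg in auto)
  then show ?thesis
    by (simp only: sign_mean_cmult diff_zero)
qed

lemma energy_trunc_ge:
  assumes "0 < T" "tail M < 1 / T" "M \<le> N"
  shows "T\<^sup>2 / 3 * sign_mean a N 0 (\<lambda>x. (weight x)\<^sup>2) / 2 ^ M - 4 * (tail 0)\<^sup>2 / sigma2\<^sup>2
    \<le> energy_trunc N T"
proof -
  define D where "D = sign_mean a N 0 (\<lambda>x. sign_mean a N 0 (\<lambda>y. (weight x)\<^sup>2 * fejer T (x - y)))"
  define E where "E = sign_mean a N 0 (\<lambda>x. sign_mean a N 0 (\<lambda>y. (weight x - weight y)\<^sup>2 * fejer T (x - y)))"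
  have polar: "weight x * weight y * fejer T (x - y) = ((weight x)\<^sup>2 * fejer T (x - y)
      + (weight y)\<^sup>2 * fejer T (y - x)) / 2 - (weight x - weight y)\<^sup>2 * fejer T (x - y) / 2" for x y
    using fejer_minus[of T "x - y"] by (simp add: power2_eq_square field_simps)
  have "sign_mean a N 0 (\<lambda>x. sign_mean a N 0 (\<lambda>y. (weight y)\<^sup>2 * fejer T (y - x))) = D"
    unfolding D_def by (rule sign_mean_swap)
  then have "energy_trunc N T = D - E / 2"
    unfolding energy_trunc_eq[OF assms(1)] polar D_def E_def
    by (simp only: sign_mean_diff sign_mean_add sign_mean_divide) simp
  moreover have "T\<^sup>2 / 3 * sign_mean a N 0 (\<lambda>x. (weight x)\<^sup>2) / 2 ^ M \<le> D"
    using sign_mean_pair_weight_square_ge[OF assms] by (simp add: D_def field_simps)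
  moreover have "E \<le> 8 * (tail 0)\<^sup>2 / sigma2\<^sup>2"
    unfolding E_def by (rule sign_mean_pair_weight_diff_le)
  ultimately show ?thesis by simp
qed

lemma energy_ge:
  assumes "0 < T" "tail M < 1 / T"
  shows "T\<^sup>2 / 3 * (1 - (\<Sum>i. a i ^ 4) / sigma2\<^sup>2) / 2 ^ M - 4 * (tail 0)\<^sup>2 / sigma2\<^sup>2 \<le> energy T"
proof (rule tendsto_lowerbound[OF energy_trunc_LIMSEQ[OF assms(1)]])
  define c where "c = 1 - (\<Sum>i. a i ^ 4) / sigma2\<^sup>2"
  have "(\<Sum>i. a i ^ 4) / sigma2\<^sup>2 < 1"
    using sum_power4_less sigma2_pos by simp
  then have "c < 2 * c"
    unfolding c_def by simp
  from order_tendstoD(1)[OF sign_mean_weight_square_LIMSEQ[folded c_def] this]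
  have "\<forall>\<^sub>F N in sequentially. c \<le> sign_mean a N 0 (\<lambda>x. (weight x)\<^sup>2)"
    by (rule eventually_mono) simp
  then show "\<forall>\<^sub>F N in sequentially. T\<^sup>2 / 3 * c / 2 ^ M - 4 * (tail 0)\<^sup>2 / sigma2\<^sup>2 \<le> energy_trunc N T"
    using eventually_ge_at_top[of M]
  proof eventually_elim
    case (elim N)
    then have "T\<^sup>2 / 3 * c / 2 ^ M \<le> T\<^sup>2 / 3 * sign_mean a N 0 (\<lambda>x. (weight x)\<^sup>2) / 2 ^ M"
      by (intro divide_right_mono mult_left_mono) auto
    then show ?case
      using energy_trunc_ge[OF assms elim(2)] by linarith
  qed
qed simp


lemma energy_ge_of_large:
  assumes T: "0 < T" and M: "1 \<le> M" "tail M < 1 / T" "1 / T \<le> tail (M - 1)"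
    and large: "48 * (tail 0) ^ 3 / (c * sigma2\<^sup>2) \<le> T"
    and c: "c = 1 - (\<Sum>i. a i ^ 4) / sigma2\<^sup>2"
  shows "c / 6 * T\<^sup>2 / 2 ^ M \<le> energy T"
proof -
  define V where "V = c / 6 * (T\<^sup>2 / 2 ^ M)"
  define X where "X = 4 * (tail 0)\<^sup>2 / sigma2\<^sup>2"
  have "0 < c"
    using c sum_power4_less sigma2_pos by simp
  have A: "0 < tail 0"
    by (rule tail_pos)
  have "T\<^sup>2 / (2 * tail 0 * T) \<le> T\<^sup>2 / 2 ^ M"
    using pow2_le_tail0_mult[OF T M(1,3)] T A by (intro divide_left_mono) auto
  then have "T / (2 * tail 0) \<le> T\<^sup>2 / 2 ^ M"
    using T by (simp add: power2_eq_square)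
  then have "c / 6 * (T / (2 * tail 0)) \<le> V"
    unfolding V_def using \<open>0 < c\<close> by (intro mult_left_mono) auto
  moreover have "X \<le> c / 6 * (T / (2 * tail 0))"
    unfolding X_def using large \<open>0 < c\<close> sigma2_pos A
    by (simp add: field_simps power2_eq_square power3_eq_cube)
  ultimately have "X \<le> V"
    by (rule order_trans[rotated])
  moreover have "2 * V - X \<le> energy T"
    using energy_ge[OF T M(2)] by (simp add: V_def X_def c)
  ultimately have "V \<le> energy T"
    by linarith
  then show ?thesis
    by (simp add: V_def)
qed

lemma energy_bounds:
  obtains C1 C2 T0 where "0 < C1" "0 < C2" "0 < T0" "1 / T0 \<le> tail 0"
    and "\<And>T M. T0 \<le> T \<Longrightarrow> 1 \<le> M \<Longrightarrow> tail M < 1 / T \<Longrightarrow> 1 / T \<le> tail (M - 1) \<Longrightarrow>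
      C1 * T\<^sup>2 / 2 ^ M \<le> energy T \<and> energy T \<le> C2 * T\<^sup>2 / 2 ^ M"
proof
  define c where "c = 1 - (\<Sum>i. a i ^ 4) / sigma2\<^sup>2"
  define T0 where "T0 = max (1 / tail 0) (48 * (tail 0) ^ 3 / (c * sigma2\<^sup>2))"
  show "0 < c / 6"
    using sum_power4_less sigma2_pos by (simp add: c_def)
  have "0 < 1 + (tail 0)\<^sup>2 / sigma2"
    using sigma2_pos by (intro add_pos_nonneg) auto
  then show "0 < 46 * (1 + (tail 0)\<^sup>2 / sigma2)\<^sup>2"
    by simp
  have "0 < 1 / tail 0" "1 / tail 0 \<le> T0"
    using tail_pos[of 0] by (simp_all add: T0_def)
  then show "0 < T0"
    by (rule less_le_trans)
  with \<open>1 / tail 0 \<le> T0\<close> show "1 / T0 \<le> tail 0"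
    using tail_pos[of 0] by (simp add: field_simps)
  fix T M
  assume "T0 \<le> T" "1 \<le> M" "tail M < 1 / T" "1 / T \<le> tail (M - 1)"
  moreover from this have "0 < T" "48 * (tail 0) ^ 3 / (c * sigma2\<^sup>2) \<le> T"
    using \<open>0 < T0\<close> by (auto simp: T0_def)
  ultimately show "c / 6 * T\<^sup>2 / 2 ^ M \<le> energy T \<and>
      energy T \<le> 46 * (1 + (tail 0)\<^sup>2 / sigma2)\<^sup>2 * T\<^sup>2 / 2 ^ M"
    using energy_ge_of_large[OF _ _ _ _ _ c_def] energy_le by blast
qed

end

theorem proposition2p1:
  fixes \<alpha> :: "nat \<Rightarrow> real"
  assumes pos: "\<And>n. n \<ge> 1 \<Longrightarrow> \<alpha> n > 0"
    and mono: "\<And>n. n \<ge> 1 \<Longrightarrow> \<alpha> (Suc n) \<le> \<alpha> n"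
    and summ: "summable (\<lambda>n. \<alpha> (Suc n))"
    and dom: "\<And>n. n \<ge> 1 \<Longrightarrow> \<alpha> n > tailsum \<alpha> n"
  defines "r \<equiv> cov \<alpha>"
    and "\<sigma>2 \<equiv> - deriv (deriv (cov \<alpha>)) 0"
  shows "\<exists>C1 C2 T0. C1 > 0 \<and> C2 > 0 \<and> T0 > 0 \<and>
    (\<forall>T\<ge>T0. C1 * T^2 / 2 ^ M_T \<alpha> T
        \<le> T * integral {0..T} (\<lambda>t. (1 - t / T) * (r t + deriv (deriv r) t / \<sigma>2)^2)
      \<and> T * integral {0..T} (\<lambda>t. (1 - t / T) * (r t + deriv (deriv r) t / \<sigma>2)^2)
        \<le> C2 * T^2 / 2 ^ M_T \<alpha> T)"
proof -
  interpret lacunary "\<lambda>n. \<alpha> (Suc n)"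
    using pos summ dom[of "Suc _"] by unfold_locales (simp_all add: tailsum_def)
  have tailsum: "tailsum \<alpha> = tail"
    by (simp add: fun_eq_iff tailsum_def tail_def)
  have "cov \<alpha> = covar"
    by (simp add: fun_eq_iff cov_def covar_def)
  then have "r = covar" "\<sigma>2 = sigma2"
    by (simp_all add: r_def \<sigma>2_def deriv2_covar covar2_0)
  then have energy: "T * integral {0..T} (\<lambda>t. (1 - t / T) * (r t + deriv (deriv r) t / \<sigma>2)^2) = energy T"
    for T
    by (simp add: energy_def deriv2_covar)
  obtain C1 C2 T0 where C: "0 < C1" "0 < C2" "0 < T0" "1 / T0 \<le> tail 0"
    and bounds: "\<And>T M. T0 \<le> T \<Longrightarrow> 1 \<le> M \<Longrightarrow> tail M < 1 / T \<Longrightarrow> 1 / T \<le> tail (M - 1) \<Longrightarrow>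
      C1 * T\<^sup>2 / 2 ^ M \<le> energy T \<and> energy T \<le> C2 * T\<^sup>2 / 2 ^ M"
    using energy_bounds by blast
  have "C1 * T\<^sup>2 / 2 ^ M_T \<alpha> T \<le> energy T \<and> energy T \<le> C2 * T\<^sup>2 / 2 ^ M_T \<alpha> T" if "T0 \<le> T" for T
  proof -
    have "0 < T" "1 / T \<le> tail 0"
      using that C(3,4) order_trans[OF divide_left_mono[OF that]] by auto
    from theI'[OF unique_scale[OF this]] show ?thesis
      unfolding M_T_def tailsum by (intro bounds that) auto
  qed
  with C show ?thesis
    unfolding energy by blast
qed

end
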